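(* For $n\geq 1$, there is a bijection $\pi\mapsto T(\pi)$ from $\mathfrak{S}_n(2413,3142)$ to $\mathfrak{D}\mathfrak{T}_n$ such that for each $i\in[n-1]$, $$\pi_i>\pi_{i+1}\quad\Longleftrightarrow\quad\text{the $i$th node of $T(\pi)$ (in in-order) is labelled } \ominus.$$ Moreover, for $0\leq k \leq \lfloor (n-1)/2 \rfloor$, this map restricts to a bijection between $$\mathfrak{S}_{n,k}^S:= \{\pi \in \mathfrak{S}_n(3142, 2413) : \mathrm{dd}(\pi)=0,\ \mathrm{des}(\pi)=k\}$$ and $$\mathfrak{D}\mathfrak{T}_{n,k}^{2} :=\{T\in\mathfrak{D}\mathfrak{T}_n :\ T \text{ has no two consecutive nodes (in in-order) both labelled } \ominus,\ \text{its first node is labelled }\oplus,\ n_\ominus(T)=k \}.$$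
   Context: $\mathfrak{S}_n(2413,3142)$ is the set of permutations $\pi=\pi_1\cdots\pi_n$ of $[n]$ avoiding the patterns $2413$ and $3142$ (no subsequence has the same relative order as $2413$ or $3142$). With $\pi_0=\pi_{n+1}=+\infty$, $\mathrm{des}(\pi)$ is the number of $i\in[n]$ with $\pi_i>\pi_{i+1}$ and $\mathrm{dd}(\pi)$ is the number of $i\in[n]$ with $\pi_{i-1}>\pi_i>\pi_{i+1}$. A binary tree is either empty or consists of a root together with a left subtree and a right subtree, both binary trees; the root of the left (right) subtree is the left (right) child. Nodes are ordered by in-order: recursively, the left subtree, then the root, then the right subtree. A right chain of a binary tree is a maximal sequence of nodes $v_1,\dots,v_l$ in which $v_1$ is either the root or a left child and each $v_{j+1}$ is the right child of $v_j$; $l$ is its length. A di-sk tree is a binary tree whose nodes are labelled by $\oplus$ or $\ominus$ such that along every right chain the labels alternate. $\mathfrak{D}\mathfrak{T}_n$ is the set of di-sk trees with $n-1$ nodes (for $n=1$ only the empty tree), and $n_\ominus(T)$ is the number of nodes of $T$ labelled $\ominus$. *)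

theory Defs
  imports Main "HOL-Library.Tree" "HOL-Library.Extended_Nat"
begin

definition perms :: "nat \<Rightarrow> nat list set" where
  "perms n = {xs. length xs = n \<and> distinct xs \<and> set xs = {1..n}}"

definition contains :: "nat list \<Rightarrow> nat list \<Rightarrow> bool" where
  "contains xs p \<longleftrightarrow> (\<exists>idx. length idx = length p \<and> sorted_wrt (<) idx
      \<and> (\<forall>j\<in>set idx. j < length xs)
      \<and> (\<forall>a<length p. \<forall>b<length p. (xs ! (idx ! a) < xs ! (idx ! b)) \<longleftrightarrow> (p ! a < p ! b)))"

definition avoiding :: "nat \<Rightarrow> nat list set" where
  "avoiding n = {xs \<in> perms n. \<not> contains xs [2,4,1,3] \<and> \<not> contains xs [3,1,4,2]}"

(* pi_i for i in 0..n+1 (1-based), with pi_0 = pi_{n+1} = +infinity *)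
definition pval :: "nat list \<Rightarrow> nat \<Rightarrow> enat" where
  "pval xs i = (if i = 0 \<or> i > length xs then \<infinity> else enat (xs ! (i - 1)))"

definition des :: "nat list \<Rightarrow> nat" where
  "des xs = card {i \<in> {1..length xs}. pval xs i > pval xs (i + 1)}"

definition dd :: "nat list \<Rightarrow> nat" where
  "dd xs = card {i \<in> {1..length xs}. pval xs (i - 1) > pval xs i \<and> pval xs i > pval xs (i + 1)}"

datatype sign = Plus | Minus

(* labels alternate along every right chain: each node differs from its right child *)
fun di_sk :: "sign tree \<Rightarrow> bool" where
  "di_sk Leaf = True"
| "di_sk (Node l a r) = (di_sk l \<and> di_sk r \<and>
     (case r of Leaf \<Rightarrow> True | Node _ b _ \<Rightarrow> b \<noteq> a))"

definition DT :: "nat \<Rightarrow> sign tree set" where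
  "DT n = {t. di_sk t \<and> size t = n - 1}"

definition n_minus :: "sign tree \<Rightarrow> nat" where
  "n_minus t = length (filter (\<lambda>x. x = Minus) (inorder t))"

definition SS :: "nat \<Rightarrow> nat \<Rightarrow> nat list set" where
  "SS n k = {xs \<in> avoiding n. dd xs = 0 \<and> des xs = k}"

definition DT2 :: "nat \<Rightarrow> nat \<Rightarrow> sign tree set" where
  "DT2 n k = {t \<in> DT n.
      (\<forall>i. i + 1 < length (inorder t) \<longrightarrow>
         \<not> (inorder t ! i = Minus \<and> inorder t ! (i + 1) = Minus))
    \<and> (\<forall>x xs. inorder t = x # xs \<longrightarrow> x = Plus)
    \<and> n_minus t = k}"

end

theory Submission
  imports Defs
begin

text \<open>
  A di-sk tree encodes a permutation recursively: a leaf is the permutation \<open>1\<close>, and a node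
  labelled \<open>\<oplus>\<close> (\<open>\<ominus>\<close>) is the direct (skew) sum of the permutations of its two subtrees.
  Sums preserve avoidance of 2413 and 3142, and conversely every such permutation of length at
  least 2 is a direct or a skew sum; splitting at the largest possible position makes the
  decomposition unique, and maximality of the split is exactly the alternation of labels
  along right chains. The junction of a sum is a descent precisely for \<open>\<ominus>\<close>, so the descent
  word of the permutation is the in-order label word of the tree, from which \<open>des\<close> and \<open>dd\<close>
  are read off.
\<close>

text \<open>For the reversed order \<open>(>)\<close>, \<open>avoids2413\<close> expresses avoidance of 3142.\<close>

definition avoids2413 :: "('a \<Rightarrow> 'a \<Rightarrow> bool) \<Rightarrow> 'a list \<Rightarrow> bool" where
  "avoids2413 R xs \<longleftrightarrow> \<not> (\<exists>i j k l. i < j \<and> j < k \<and> k < l \<and> l < length xs \<and>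
      R (xs ! k) (xs ! i) \<and> R (xs ! i) (xs ! l) \<and> R (xs ! l) (xs ! j))"

lemma contains_length4:
  assumes "length p = 4"
  shows "contains xs p \<longleftrightarrow> (\<exists>i j k l. i < j \<and> j < k \<and> k < l \<and> l < length xs \<and>
    (\<forall>a<4. \<forall>b<4. ([xs!i, xs!j, xs!k, xs!l] ! a < [xs!i, xs!j, xs!k, xs!l] ! b) \<longleftrightarrow> p ! a < p ! b))"
proof
  assume "contains xs p"
  then obtain idx where idx: "length idx = 4" "sorted_wrt (<) idx" "\<forall>j\<in>set idx. j < length xs"
      "\<forall>a<4. \<forall>b<4. (xs ! (idx ! a) < xs ! (idx ! b)) \<longleftrightarrow> p ! a < p ! b"
    using assms unfolding contains_def by auto
  moreover from idx(1) obtain i j k l where "idx = [i,j,k,l]"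
    by (auto simp: numeral_eq_Suc length_Suc_conv)
  ultimately show "\<exists>i j k l. i < j \<and> j < k \<and> k < l \<and> l < length xs \<and>
    (\<forall>a<4. \<forall>b<4. ([xs!i, xs!j, xs!k, xs!l] ! a < [xs!i, xs!j, xs!k, xs!l] ! b) \<longleftrightarrow> p ! a < p ! b)"
    by (intro exI[of _ i] exI[of _ j] exI[of _ k] exI[of _ l]) (auto simp flip: nth_map[of _ "[i,j,k,l]"])
next
  assume "\<exists>i j k l. i < j \<and> j < k \<and> k < l \<and> l < length xs \<and>
    (\<forall>a<4. \<forall>b<4. ([xs!i, xs!j, xs!k, xs!l] ! a < [xs!i, xs!j, xs!k, xs!l] ! b) \<longleftrightarrow> p ! a < p ! b)"
  then obtain i j k l where "i < j" "j < k" "k < l" "l < length xs"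
      "\<forall>a<4. \<forall>b<4. ([xs!i, xs!j, xs!k, xs!l] ! a < [xs!i, xs!j, xs!k, xs!l] ! b) \<longleftrightarrow> p ! a < p ! b"
    by blast
  with assms show "contains xs p"
    unfolding contains_def by (intro exI[of _ "[i,j,k,l]"]) (auto simp flip: nth_map[of _ "[i,j,k,l]"])
qed

lemma all_less_4: "(\<forall>a<(4::nat). P a) \<longleftrightarrow> P 0 \<and> P 1 \<and> P 2 \<and> P 3"
  by (auto simp: less_Suc_eq numeral_eq_Suc)

lemma order_type_2413:
  fixes a b c d :: nat
  shows "(\<forall>x<4. \<forall>y<4. [a,b,c,d] ! x < [a,b,c,d] ! y \<longleftrightarrow> [2,4,1,3::nat] ! x < [2,4,1,3::nat] ! y)
     \<longleftrightarrow> c < a \<and> a < d \<and> d < b"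
  unfolding all_less_4 by (auto simp: numeral_eq_Suc)

lemma order_type_3142:
  fixes a b c d :: nat
  shows "(\<forall>x<4. \<forall>y<4. [a,b,c,d] ! x < [a,b,c,d] ! y \<longleftrightarrow> [3,1,4,2::nat] ! x < [3,1,4,2::nat] ! y)
     \<longleftrightarrow> b < d \<and> d < a \<and> a < c"
  unfolding all_less_4 by (auto simp: numeral_eq_Suc)

lemma contains_2413_iff: "contains xs [2,4,1,3] \<longleftrightarrow> \<not> avoids2413 (<) xs"
  by (subst contains_length4) (simp, simp only: order_type_2413 avoids2413_def, blast)

lemma contains_3142_iff: "contains xs [3,1,4,2] \<longleftrightarrow> \<not> avoids2413 (>) xs"
  by (subst contains_length4) (simp, simp only: order_type_3142 avoids2413_def, blast)

lemma avoids2413_reindex: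
  assumes "avoids2413 R xs" "strict_mono f"
    and "\<And>i. i < length ys \<Longrightarrow> f i < length xs \<and> ys ! i = xs ! f i"
  shows "avoids2413 R ys"
  unfolding avoids2413_def
proof clarify
  fix i j k l
  assume "i < j" "j < k" "k < l" "l < length ys"
    "R (ys ! k) (ys ! i)" "R (ys ! i) (ys ! l)" "R (ys ! l) (ys ! j)"
  moreover from this have "f i < f j" "f j < f k" "f k < f l" "f l < length xs"
    using assms(2,3) by (auto simp: strict_mono_less)
  ultimately show False
    using assms(1) assms(3)[of i] assms(3)[of j] assms(3)[of k] assms(3)[of l]
    unfolding avoids2413_def by auto
qed

lemma avoids2413_appendD1: "avoids2413 R (xs @ ys) \<Longrightarrow> avoids2413 R xs"
  by (erule avoids2413_reindex[where f = id]) (auto simp: strict_mono_def nth_append)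

lemma avoids2413_appendD2: "avoids2413 R (xs @ ys) \<Longrightarrow> avoids2413 R ys"
  by (erule avoids2413_reindex[where f = "\<lambda>i. length xs + i"]) (auto simp: strict_mono_def)

lemma avoids2413_map:
  assumes "\<And>x y. R (f x) (f y) \<longleftrightarrow> R x y"
  shows "avoids2413 R (map f xs) \<longleftrightarrow> avoids2413 R xs"
proof -
  have "R (map f xs ! a) (map f xs ! b) \<longleftrightarrow> R (xs ! a) (xs ! b)"
    if "a < length xs" "b < length xs" for a b
    using that assms by simp
  then show ?thesis
    unfolding avoids2413_def length_map by (meson order.strict_trans)
qed

lemma avoids2413_append:
  assumes asym: "\<And>x y. R x y \<Longrightarrow> \<not> R y x"
    and "avoids2413 R xs" "avoids2413 R ys"
    and block: "(\<forall>x\<in>set xs. \<forall>y\<in>set ys. R x y) \<or> (\<forall>x\<in>set xs. \<forall>y\<in>set ys. R y x)"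
  shows "avoids2413 R (xs @ ys)"
  unfolding avoids2413_def
proof clarify
  fix i j k l
  let ?zs = "xs @ ys" and ?m = "length xs"
  assume pos: "i < j" "j < k" "k < l" "l < length ?zs"
    and pat: "R (?zs ! k) (?zs ! i)" "R (?zs ! i) (?zs ! l)" "R (?zs ! l) (?zs ! j)"
  have cross: "?zs ! p \<in> set xs" "?zs ! q \<in> set ys" if "p < ?m" "?m \<le> q" "q < length ?zs" for p q
    using that by (auto simp: nth_append)
  consider "l < ?m" | "?m \<le> i" | "i < ?m" "?m \<le> l" by linarith
  then show False
  proof cases
    case 1
    with pos pat have "R (xs ! k) (xs ! i) \<and> R (xs ! i) (xs ! l) \<and> R (xs ! l) (xs ! j)"
      by (simp add: nth_append)
    with 1 pos have "\<not> avoids2413 R xs"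
      unfolding avoids2413_def by blast
    with assms(2) show False by contradiction
  next
    case 2
    with pos pat have "R (ys ! (k - ?m)) (ys ! (i - ?m)) \<and> R (ys ! (i - ?m)) (ys ! (l - ?m)) \<and>
        R (ys ! (l - ?m)) (ys ! (j - ?m))"
      by (simp add: nth_append)
    moreover from 2 pos have "i - ?m < j - ?m" "j - ?m < k - ?m" "k - ?m < l - ?m" "l - ?m < length ys"
      by auto
    ultimately have "\<not> avoids2413 R ys"
      unfolding avoids2413_def by blast
    with assms(3) show False by contradiction
  next
    case 3
    \<comment> \<open>an occurrence straddling the two blocks compares one pair of its entries the wrong way\<close>
    from block show False
    proof
      assume below: "\<forall>x\<in>set xs. \<forall>y\<in>set ys. R x y"
      show False
      proof (cases "k < ?m")
        case True
        with below cross[of j l] pos 3 have "R (?zs ! j) (?zs ! l)" by simp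
        with pat(3) asym show False by blast
      next
        case False
        with below cross[of i k] pos 3 have "R (?zs ! i) (?zs ! k)" by simp
        with pat(1) asym show False by blast
      qed
    next
      assume "\<forall>x\<in>set xs. \<forall>y\<in>set ys. R y x"
      with cross[of i l] pos 3 have "R (?zs ! l) (?zs ! i)" by simp
      with pat(2) asym show False by blast
    qed
  qed
qed

text \<open>For \<open>R = (<)\<close> (\<open>R = (>)\<close>), \<open>splits_at R xs k\<close> says that \<open>xs\<close> is a direct (skew) sum
  of its first \<open>k\<close> and its remaining entries.\<close>

definition splits_at :: "('a \<Rightarrow> 'a \<Rightarrow> bool) \<Rightarrow> 'a list \<Rightarrow> nat \<Rightarrow> bool" where
  "splits_at R xs k \<longleftrightarrow> 0 < k \<and> k < length xs \<and>
     (\<forall>x\<in>set (take k xs). \<forall>y\<in>set (drop k xs). R x y)"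

lemma in_set_take_conv_nth: "x \<in> set (take k xs) \<longleftrightarrow> (\<exists>a<k. a < length xs \<and> x = xs ! a)"
  by (auto simp: in_set_conv_nth)

lemma in_set_drop_conv_nth: "y \<in> set (drop k xs) \<longleftrightarrow> (\<exists>b. k \<le> b \<and> b < length xs \<and> y = xs ! b)"
proof
  assume "y \<in> set (drop k xs)"
  then obtain i where "i < length xs - k" "y = xs ! (k + i)"
    by (auto simp: in_set_conv_nth)
  then show "\<exists>b. k \<le> b \<and> b < length xs \<and> y = xs ! b"
    by (intro exI[of _ "k + i"]) auto
next
  assume "\<exists>b. k \<le> b \<and> b < length xs \<and> y = xs ! b"
  then obtain b where "k \<le> b" "b < length xs" "y = xs ! b"
    by blast
  then show "y \<in> set (drop k xs)"
    unfolding in_set_conv_nth by (intro exI[of _ "b - k"]) auto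
qed

lemma splits_at_nth_iff:
  "splits_at R xs k \<longleftrightarrow> 0 < k \<and> k < length xs \<and>
     (\<forall>a<k. \<forall>b. k \<le> b \<longrightarrow> b < length xs \<longrightarrow> R (xs ! a) (xs ! b))"
proof -
  have "(\<forall>x\<in>set (take k xs). \<forall>y\<in>set (drop k xs). R x y) \<longleftrightarrow>
        (\<forall>a<k. \<forall>b. k \<le> b \<longrightarrow> b < length xs \<longrightarrow> R (xs ! a) (xs ! b))" if "k < length xs"
  proof
    assume block: "\<forall>x\<in>set (take k xs). \<forall>y\<in>set (drop k xs). R x y"
    show "\<forall>a<k. \<forall>b. k \<le> b \<longrightarrow> b < length xs \<longrightarrow> R (xs ! a) (xs ! b)"
    proof (intro allI impI)
      fix a b assume "a < k" "k \<le> b" "b < length xs"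
      with that have "xs ! a \<in> set (take k xs)" "xs ! b \<in> set (drop k xs)"
        by (auto simp: in_set_take_conv_nth in_set_drop_conv_nth)
      with block show "R (xs ! a) (xs ! b)" by blast
    qed
  qed (auto simp: in_set_take_conv_nth in_set_drop_conv_nth)
  then show ?thesis
    unfolding splits_at_def by blast
qed

lemma splits_at_hd_last:
  assumes "splits_at R xs k"
  shows "R (hd xs) (last xs)"
proof -
  have k: "0 < k" "k < length xs"
    using assms by (auto simp: splits_at_def)
  then have "hd xs = hd (take k xs)" "take k xs \<noteq> []" "last xs = last (drop k xs)" "drop k xs \<noteq> []"
    by auto
  then show ?thesis
    using assms unfolding splits_at_def by (metis hd_in_set last_in_set)
qed

lemma splits_at_drop:
  assumes "splits_at R xs k" "m < k"
  shows "splits_at R (drop m xs) (k - m)"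
proof -
  have "take (k - m) (drop m xs) = drop m (take k xs)" "drop (k - m) (drop m xs) = drop k xs"
    using assms(2) by (simp_all add: take_drop)
  then show ?thesis
    using assms unfolding splits_at_def by (auto dest: in_set_dropD)
qed

lemma splits_at_add:
  assumes "splits_at R xs k" "splits_at R (drop k xs) j"
  shows "splits_at R xs (k + j)"
  unfolding splits_at_def
proof (intro conjI ballI)
  from assms show "0 < k + j" "k + j < length xs"
    by (auto simp: splits_at_def)
  fix x y
  assume x: "x \<in> set (take (k + j) xs)" and y: "y \<in> set (drop (k + j) xs)"
  from y have "y \<in> set (drop k xs)"
    using set_drop_subset_set_drop[of k "k + j" xs] by auto
  moreover from y have "y \<in> set (drop j (drop k xs))"
    by (simp add: add.commute)
  moreover from x have "x \<in> set (take k xs) \<or> x \<in> set (take j (drop k xs))"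
    by (simp add: take_add)
  ultimately show "R x y"
    using assms by (auto simp: splits_at_def)
qed

lemma splits_at_map:
  "(\<And>x y. R (f x) (f y) \<longleftrightarrow> R x y) \<Longrightarrow> splits_at R (map f xs) k \<longleftrightarrow> splits_at R xs k"
  by (simp add: splits_at_def take_map drop_map)

text \<open>Stated for an arbitrary linear order, so that the dual order yields the skew case.\<close>

context linorder
begin

lemma splits_at_snoc_straddling:
  assumes v: "v \<notin> set ys" and avoid: "avoids2413 (>) (ys @ [v])"
    and split: "splits_at (<) ys k"
    and a0: "a0 < k" "v < ys ! a0" and a1: "a1 < k" "ys ! a1 < v"
  shows "\<exists>j. splits_at (<) (ys @ [v]) j"
proof -
  let ?n = "length ys" and ?zs = "ys @ [v]"
  have k: "0 < k" "k < ?n" and AB: "\<And>a b. a < k \<Longrightarrow> k \<le> b \<Longrightarrow> b < ?n \<Longrightarrow> ys ! a < ys ! b"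
    using split unfolding splits_at_nth_iff by auto
  have cmp: "ys ! i < v \<or> v < ys ! i" if "i < ?n" for i
    using v nth_mem[OF that] by (cases "ys ! i" v rule: linorder_cases) auto
  define j where "j = (LEAST i. v < ys ! i)"
  have j: "v < ys ! j" "j \<le> a0"
    using LeastI[of "\<lambda>i. v < ys ! i" a0] Least_le[of "\<lambda>i. v < ys ! i" a0] a0(2)
    unfolding j_def by auto
  have below: "ys ! i < v" if "i < j" for i
    using not_less_Least[OF that[unfolded j_def]] cmp[of i] that j(2) a0(1) k
    by (auto simp: j_def)
  \<comment> \<open>an entry below \<open>v\<close> between positions \<open>j\<close> and \<open>k\<close> would give the occurrence
      \<open>ys!j, ys!p, ys!k, v\<close> of 3142\<close>
  have between: "v < ys ! p" if "j \<le> p" "p < k" for p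
  proof (rule ccontr)
    assume "\<not> v < ys ! p"
    with cmp[of p] that k have p: "ys ! p < v" by auto
    with j(1) that(1) have "j < p" by (cases "j = p") auto
    moreover have "ys ! j < ys ! k"
      using AB[of j k] j(2) a0(1) k by simp
    ultimately have "\<not> avoids2413 (>) ?zs"
      unfolding avoids2413_def not_not using that k j(1) p
      by (intro exI[of _ j] exI[of _ p] exI[of _ k] exI[of _ ?n]) (simp add: nth_append)
    with avoid show False by contradiction
  qed
  have "0 < j"
    using between[of a1] a1 by (cases "j = 0") auto
  have "splits_at (<) ?zs j"
    unfolding splits_at_nth_iff
  proof (intro conjI allI impI)
    fix a b assume ab: "a < j" "j \<le> b" "b < length ?zs"
    consider "b < k" | "k \<le> b" "b < ?n" | "b = ?n"
      using ab(3) by fastforce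
    then show "?zs ! a < ?zs ! b"
    proof cases
      case 1
      with ab below[of a] between[of b] k show ?thesis
        by (auto simp: nth_append intro: less_trans)
    next
      case 2
      with ab j(2) a0(1) AB[of a b] show ?thesis
        by (simp add: nth_append)
    next
      case 3
      with ab below[of a] j(2) a0(1) k show ?thesis
        by (simp add: nth_append)
    qed
  qed (use \<open>0 < j\<close> j(2) a0(1) k in auto)
  then show ?thesis by blast
qed

lemma splits_at_snoc:
  assumes v: "v \<notin> set ys" and avoid: "avoids2413 (>) (ys @ [v])"
    and split: "splits_at (<) ys k"
  shows "\<exists>j. splits_at (<) (ys @ [v]) j \<or> splits_at (>) (ys @ [v]) j"
proof -
  let ?n = "length ys" and ?zs = "ys @ [v]"
  have k: "0 < k" "k < ?n" and AB: "\<And>a b. a < k \<Longrightarrow> k \<le> b \<Longrightarrow> b < ?n \<Longrightarrow> ys ! a < ys ! b"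
    using split unfolding splits_at_nth_iff by auto
  have cmp: "ys ! i < v \<or> v < ys ! i" if "i < ?n" for i
    using v nth_mem[OF that] by (cases "ys ! i" v rule: linorder_cases) auto
  show ?thesis
  proof (cases "\<exists>a0<k. v < ys ! a0")
    case False
    then have "ys ! a < v" if "a < k" for a
      using cmp[of a] that k by auto
    then have "splits_at (<) ?zs k"
      using AB k unfolding splits_at_nth_iff by (auto simp: nth_append less_Suc_eq)
    then show ?thesis by blast
  next
    case True
    then obtain a0 where a0: "a0 < k" "v < ys ! a0" by blast
    show ?thesis
    proof (cases "\<exists>a1<k. ys ! a1 < v")
      case True
      then show ?thesis
        using splits_at_snoc_straddling[OF v avoid split a0] by blast
    next
      case False
      then have "v < ys ! a" if "a < k" for a
        using cmp[of a] that k by auto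
      then have "v < ys ! b" if "b < ?n" for b
        using that k AB[of 0 b] by (cases "b < k") (auto intro: less_trans)
      then have "splits_at (>) ?zs ?n"
        using k unfolding splits_at_nth_iff by (auto simp: nth_append)
      then show ?thesis by blast
    qed
  qed
qed
end

fun sign_rel :: "sign \<Rightarrow> nat \<Rightarrow> nat \<Rightarrow> bool" where
  "sign_rel Plus = (<)"
| "sign_rel Minus = (>)"

lemma sign_rel_asym: "sign_rel a x y \<Longrightarrow> \<not> sign_rel a y x"
  by (cases a) auto

lemma sign_rel_opposite: "a \<noteq> b \<Longrightarrow> sign_rel b x y \<longleftrightarrow> sign_rel a y x"
  by (cases a; cases b) auto

lemma sign_rel_add_right [simp]: "sign_rel a (x + c) (y + c) \<longleftrightarrow> sign_rel a x y"
  by (cases a) auto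

lemma all_sign: "(\<forall>b. P b) \<longleftrightarrow> P Plus \<and> P Minus"
  by (metis sign.exhaust)

lemma perms_memD: "xs \<in> perms n \<Longrightarrow> x \<in> set xs \<Longrightarrow> 1 \<le> x \<and> x \<le> n"
  unfolding perms_def by auto

fun sign_sum :: "sign \<Rightarrow> nat list \<Rightarrow> nat list \<Rightarrow> nat list" where
  "sign_sum Plus xs ys = xs @ map (\<lambda>y. y + length xs) ys"
| "sign_sum Minus xs ys = map (\<lambda>x. x + length ys) xs @ ys"

lemma length_sign_sum [simp]: "length (sign_sum a xs ys) = length xs + length ys"
  by (cases a) auto

lemma sign_sum_perms:
  assumes "xs \<in> perms m" "ys \<in> perms n"
  shows "sign_sum a xs ys \<in> perms (m + n)"
proof -
  have "{1..m} \<union> {m + 1..n + m} = {1..m + n}" "{n + 1..m + n} \<union> {1..n} = {1..m + n}"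
    by auto
  moreover have "inj (\<lambda>x::nat. x + c)" for c
    by (simp add: inj_on_def)
  ultimately show ?thesis
    using assms by (cases a) (auto simp: perms_def distinct_map inj_on_def)
qed

lemma sign_sum_block:
  assumes "xs \<in> perms m" "ys \<in> perms n"
  shows "\<forall>x\<in>set (take m (sign_sum a xs ys)). \<forall>y\<in>set (drop m (sign_sum a xs ys)). sign_rel a x y"
  using assms perms_memD[OF assms(1)] perms_memD[OF assms(2)]
  by (cases a) (fastforce simp: perms_def)+

lemma splits_at_sign_sum:
  "xs \<in> perms m \<Longrightarrow> ys \<in> perms n \<Longrightarrow> 0 < m \<Longrightarrow> 0 < n \<Longrightarrow>
   splits_at (sign_rel a) (sign_sum a xs ys) m"
  using sign_sum_block unfolding splits_at_def perms_def by fastforce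

lemma splits_at_drop_sign_sum:
  "splits_at (sign_rel b) (drop (length xs) (sign_sum a xs ys)) j \<longleftrightarrow> splits_at (sign_rel b) ys j"
  by (cases a) (simp_all add: splits_at_map)

lemma splits_at_sign_sum_add:
  assumes "splits_at (sign_rel a) (sign_sum a xs ys) (length xs)" "splits_at (sign_rel a) ys j"
  shows "splits_at (sign_rel a) (sign_sum a xs ys) (length xs + j)"
  using splits_at_add[OF assms(1)] assms(2) by (simp add: splits_at_drop_sign_sum)

lemma avoids2413_sign_sum_iff:
  assumes "xs \<in> perms m" "ys \<in> perms n"
  shows "avoids2413 (sign_rel b) (sign_sum a xs ys) \<longleftrightarrow>
    avoids2413 (sign_rel b) xs \<and> avoids2413 (sign_rel b) ys"
proof -
  let ?zs = "sign_sum a xs ys"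
  have m: "length xs = m" using assms(1) by (simp add: perms_def)
  have parts: "avoids2413 (sign_rel b) (take m ?zs) \<longleftrightarrow> avoids2413 (sign_rel b) xs"
    "avoids2413 (sign_rel b) (drop m ?zs) \<longleftrightarrow> avoids2413 (sign_rel b) ys"
    using m by (cases a; simp add: avoids2413_map)+
  have "(\<forall>x\<in>set (take m ?zs). \<forall>y\<in>set (drop m ?zs). sign_rel b x y) \<or>
        (\<forall>x\<in>set (take m ?zs). \<forall>y\<in>set (drop m ?zs). sign_rel b y x)"
    using sign_sum_block[OF assms, of a] sign_rel_opposite[of a b] by (cases "a = b") auto
  from avoids2413_append[OF sign_rel_asym _ _ this] show ?thesis
    using avoids2413_appendD1 avoids2413_appendD2 parts by (metis append_take_drop_id)
qed

fun perm_of_tree :: "sign tree \<Rightarrow> nat list" where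
  "perm_of_tree Leaf = [1]"
| "perm_of_tree (Node l a r) = sign_sum a (perm_of_tree l) (perm_of_tree r)"

lemma perm_of_tree_perms: "perm_of_tree t \<in> perms (Suc (size t))"
proof (induction t)
  case Leaf
  then show ?case by (simp add: perms_def)
next
  case (Node l a r)
  then show ?case using sign_sum_perms[OF Node.IH, of a] by simp
qed

lemma length_perm_of_tree [simp]: "length (perm_of_tree t) = Suc (size t)"
  using perm_of_tree_perms[of t] by (simp add: perms_def)

lemma avoids2413_perm_of_tree: "avoids2413 (sign_rel b) (perm_of_tree t)"
proof (induction t)
  case Leaf
  then show ?case by (simp add: avoids2413_def)
next
  case (Node l a r)
  then show ?case
    by (simp add: avoids2413_sign_sum_iff[OF perm_of_tree_perms perm_of_tree_perms])
qed

lemma splits_at_perm_of_tree: "splits_at (sign_rel a) (perm_of_tree (Node l a r)) (Suc (size l))"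
  by (simp add: splits_at_sign_sum[OF perm_of_tree_perms perm_of_tree_perms])

lemma splits_at_perm_of_tree_root:
  assumes "splits_at (sign_rel b) (perm_of_tree t) k"
  obtains l r where "t = Node l b r"
proof (cases t)
  case Leaf
  then show ?thesis using assms by (auto simp: splits_at_def)
next
  case (Node l a r)
  have "sign_rel a (hd (perm_of_tree t)) (last (perm_of_tree t))"
    "sign_rel b (hd (perm_of_tree t)) (last (perm_of_tree t))"
    using splits_at_hd_last assms splits_at_perm_of_tree Node by blast+
  then have "a = b" using sign_rel_opposite sign_rel_asym by blast
  then show ?thesis using that Node by blast
qed

lemma splits_at_perm_of_tree_le:
  assumes "di_sk (Node l a r)" "splits_at (sign_rel a) (perm_of_tree (Node l a r)) k"
  shows "k \<le> Suc (size l)"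
proof (rule ccontr)
  let ?l = "perm_of_tree l" and ?r = "perm_of_tree r"
  assume "\<not> k \<le> Suc (size l)"
  then have "splits_at (sign_rel a) (drop (length ?l) (sign_sum a ?l ?r)) (k - length ?l)"
    using splits_at_drop[OF assms(2)[unfolded perm_of_tree.simps], of "length ?l"] by simp
  then have "splits_at (sign_rel a) ?r (k - length ?l)"
    by (simp only: splits_at_drop_sign_sum)
  then obtain l' r' where "r = Node l' a r'"
    by (rule splits_at_perm_of_tree_root)
  then show False using assms(1) by simp
qed

lemma sign_sum_eq_sign_sum_iff:
  assumes "length xs = length xs'"
  shows "sign_sum a xs ys = sign_sum a xs' ys' \<longleftrightarrow> xs = xs' \<and> ys = ys'"
proof -
  have inj: "inj (\<lambda>x::nat. x + c)" for c
    by (simp add: inj_on_def)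
  show ?thesis
  proof (cases a)
    case Plus
    with assms show ?thesis
      by (auto simp: append_eq_append_conv inj_map_eq_map[OF inj])
  next
    case Minus
    have "map (\<lambda>x. x + length ys) xs @ ys = map (\<lambda>x. x + length ys') xs' @ ys' \<longleftrightarrow>
          map (\<lambda>x. x + length ys) xs = map (\<lambda>x. x + length ys') xs' \<and> ys = ys'"
      using assms by (simp add: append_eq_append_conv)
    with Minus show ?thesis
      by (auto simp: inj_map_eq_map[OF inj])
  qed
qed

lemma perm_of_tree_inj:
  "di_sk t \<Longrightarrow> di_sk t' \<Longrightarrow> perm_of_tree t = perm_of_tree t' \<Longrightarrow> t = t'"
proof (induction t arbitrary: t')
  case Leaf
  have "length (perm_of_tree Leaf) = length (perm_of_tree t')"
    using Leaf.prems(3) by (rule arg_cong)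
  then show ?case by (cases t') auto
next
  case (Node l a r)
  have "length (perm_of_tree (Node l a r)) = length (perm_of_tree t')"
    using Node.prems(3) by (rule arg_cong)
  then obtain l' a' r' where t': "t' = Node l' a' r'"
    by (cases t') auto
  let ?p = "perm_of_tree (Node l a r)"
  have split': "splits_at (sign_rel a') ?p (Suc (size l'))"
    using Node.prems(3) splits_at_perm_of_tree t' by metis
  then have "a' = a" using splits_at_perm_of_tree_root by blast
  have "Suc (size l') \<le> Suc (size l)"
    using splits_at_perm_of_tree_le Node.prems(1) split' \<open>a' = a\<close> by blast
  moreover have "Suc (size l) \<le> Suc (size l')"
    using splits_at_perm_of_tree_le Node.prems(2,3) splits_at_perm_of_tree t' \<open>a' = a\<close> by metis
  ultimately have "perm_of_tree l = perm_of_tree l' \<and> perm_of_tree r = perm_of_tree r'"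
    using Node.prems(3) t' \<open>a' = a\<close> by (simp add: sign_sum_eq_sign_sum_iff)
  then show ?case using Node t' \<open>a' = a\<close> by simp
qed

lemma sign_splits_at_snoc:
  assumes "v \<notin> set ys" "\<forall>b. avoids2413 (sign_rel b) (ys @ [v])"
    and "splits_at (sign_rel a) ys k"
  shows "\<exists>b j. splits_at (sign_rel b) (ys @ [v]) j"
proof -
  have "\<exists>j. splits_at (<) (ys @ [v]) j \<or> splits_at (>) (ys @ [v]) j"
  proof (cases a)
    case Plus
    with assms show ?thesis
      by (intro splits_at_snoc[of v ys k]) (simp_all add: all_sign)
  next
    case Minus
    with assms have "\<exists>j. splits_at (>) (ys @ [v]) j \<or> splits_at (<) (ys @ [v]) j"
      by (intro linorder.splits_at_snoc[OF dual_linorder, of v ys k]) (simp_all add: all_sign)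
    then show ?thesis by blast
  qed
  then obtain j where "splits_at (sign_rel Plus) (ys @ [v]) j \<or> splits_at (sign_rel Minus) (ys @ [v]) j"
    by auto
  then show ?thesis by blast
qed

lemma splits_at_exists:
  "distinct xs \<Longrightarrow> 2 \<le> length xs \<Longrightarrow> \<forall>b. avoids2413 (sign_rel b) xs \<Longrightarrow>
   \<exists>a k. splits_at (sign_rel a) xs k"
proof (induction xs rule: rev_induct)
  case Nil
  then show ?case by simp
next
  case (snoc v ys)
  show ?case
  proof (cases "length ys < 2")
    case True
    with snoc.prems obtain u where "ys = [u]" "u \<noteq> v"
      by (cases ys) auto
    then have "splits_at (sign_rel (if u < v then Plus else Minus)) (ys @ [v]) 1"
      by (auto simp: splits_at_def)
    then show ?thesis by blast
  next
    case False
    with snoc obtain a k where "splits_at (sign_rel a) ys k"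
      by (auto dest: avoids2413_appendD1)
    moreover have "v \<notin> set ys" using snoc.prems(1) by simp
    ultimately show ?thesis using sign_splits_at_snoc snoc.prems(3) by blast
  qed
qed

lemma lower_part_eq_atLeastAtMost:
  assumes "A \<union> B = {1..n::nat}" "\<forall>a\<in>A. \<forall>b\<in>B. a < b"
  shows "A = {1..card A}"
proof -
  have "A \<subseteq> {1..n}" using assms(1) by blast
  then have fin: "finite A" by (rule finite_subset) simp
  have "A \<subseteq> {1..card A}"
  proof
    fix a assume a: "a \<in> A"
    have "{1..a} \<subseteq> A"
    proof
      fix w assume w: "w \<in> {1..a}"
      with a \<open>A \<subseteq> {1..n}\<close> assms(1) have "w \<in> A \<union> B" by auto
      moreover from w a assms(2) have "w \<notin> B" by fastforce
      ultimately show "w \<in> A" by blast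
    qed
    then have "card {1..a} \<le> card A" by (rule card_mono[OF fin])
    with a \<open>A \<subseteq> {1..n}\<close> show "a \<in> {1..card A}" by auto
  qed
  then show ?thesis
    using card_subset_eq[OF finite_atLeastAtMost \<open>A \<subseteq> {1..card A}\<close>] by simp
qed

lemma perms_append_lower_upper:
  assumes "set ys \<union> set zs = {1..n}" "distinct (ys @ zs)" "\<forall>y\<in>set ys. \<forall>z\<in>set zs. y < z"
  shows "ys \<in> perms (length ys)"
    and "\<exists>\<tau>. \<tau> \<in> perms (length zs) \<and> zs = map (\<lambda>z. z + length ys) \<tau>"
proof -
  have ys: "set ys = {1..length ys}"
    using lower_part_eq_atLeastAtMost[OF assms(1,3)] assms(2) by (simp add: distinct_card)
  then show "ys \<in> perms (length ys)"
    using assms(2) by (simp add: perms_def)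
  have "length (ys @ zs) = card {1..n}"
    using assms(1,2) by (metis distinct_card set_append)
  then have "n = length ys + length zs"
    by simp
  moreover have "set zs = {1..n} - set ys"
    using assms(1,2) by auto
  ultimately have zs: "set zs = {length ys + 1..length ys + length zs}"
    using ys by auto
  let ?\<tau> = "map (\<lambda>z. z - length ys) zs"
  have "zs = map (\<lambda>z. z + length ys) ?\<tau>"
    unfolding map_map by (rule map_idI[symmetric]) (use zs in auto)
  moreover have "?\<tau> \<in> perms (length zs)"
  proof -
    have "set ?\<tau> = (\<lambda>z. z - length ys) ` {length ys + 1..length ys + length zs}"
      using zs by simp
    also have "\<dots> = {1..length zs}"
      by (auto simp: image_iff intro!: bexI[where x = "_ + length ys"])
    finally show ?thesis
      using assms(2) zs by (auto simp: perms_def distinct_map inj_on_def)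
  qed
  ultimately show "\<exists>\<tau>. \<tau> \<in> perms (length zs) \<and> zs = map (\<lambda>z. z + length ys) \<tau>"
    by blast
qed

lemma sign_sum_decompose:
  assumes "xs \<in> perms n" "splits_at (sign_rel a) xs k"
  obtains \<sigma> \<tau> where "\<sigma> \<in> perms k" "\<tau> \<in> perms (n - k)" "xs = sign_sum a \<sigma> \<tau>"
proof -
  let ?ys = "take k xs" and ?zs = "drop k xs"
  have len: "length ?ys = k" "length ?zs = n - k"
    using assms by (auto simp: perms_def splits_at_def)
  have "set ?ys \<union> set ?zs = set xs"
    by (metis append_take_drop_id set_append)
  then have set: "set ?ys \<union> set ?zs = {1..n}" "set ?zs \<union> set ?ys = {1..n}"
    using assms(1) by (auto simp: perms_def)
  have dist: "distinct (?ys @ ?zs)"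
    using assms(1) by (simp add: perms_def)
  then have dist': "distinct (?zs @ ?ys)"
    unfolding distinct_append by blast
  have block: "\<forall>y\<in>set ?ys. \<forall>z\<in>set ?zs. sign_rel a y z"
    using assms(2) by (simp add: splits_at_def)
  show ?thesis
  proof (cases a)
    case Plus
    with block have "\<forall>y\<in>set ?ys. \<forall>z\<in>set ?zs. y < z" by simp
    from perms_append_lower_upper[OF set(1) dist this] len obtain \<tau>
      where "?ys \<in> perms k" "\<tau> \<in> perms (n - k)" "?zs = map (\<lambda>z. z + length ?ys) \<tau>"
      by auto
    with Plus show ?thesis
      using that[of ?ys \<tau>] by (metis append_take_drop_id sign_sum.simps(1))
  next
    case Minus
    with block have "\<forall>z\<in>set ?zs. \<forall>y\<in>set ?ys. z < y" by simp
    from perms_append_lower_upper[OF set(2) dist' this] len obtain \<sigma>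
      where "?zs \<in> perms (n - k)" "\<sigma> \<in> perms k" "?ys = map (\<lambda>y. y + length ?zs) \<sigma>"
      by auto
    with Minus show ?thesis
      using that[of \<sigma> ?zs] by (metis append_take_drop_id sign_sum.simps(2))
  qed
qed

lemma splits_at_greatest:
  "splits_at R xs k \<Longrightarrow> \<exists>k'. splits_at R xs k' \<and> (\<forall>j. splits_at R xs j \<longrightarrow> j \<le> k')"
  by (rule Nat.ex_has_greatest_nat[where b = "length xs"]) (auto simp: splits_at_def)

lemma perm_of_tree_surj:
  assumes "xs \<in> perms n" "0 < n" "\<forall>b. avoids2413 (sign_rel b) xs"
  shows "\<exists>t. di_sk t \<and> perm_of_tree t = xs"
  using assms
proof (induction n arbitrary: xs rule: less_induct)
  case (less n)
  show ?case
  proof (cases "n = 1")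
    case True
    with less.prems have "xs = [1]"
      by (cases xs) (auto simp: perms_def)
    then show ?thesis by (intro exI[of _ Leaf]) simp
  next
    case False
    with less.prems obtain a k0 where split0: "splits_at (sign_rel a) xs k0"
      using splits_at_exists by (fastforce simp: perms_def)
    obtain k where split: "splits_at (sign_rel a) xs k"
      and greatest: "\<And>j. splits_at (sign_rel a) xs j \<Longrightarrow> j \<le> k"
      using splits_at_greatest[OF split0] by blast
    then have k: "0 < k" "k < n"
      using less.prems(1) by (auto simp: splits_at_def perms_def)
    obtain \<sigma> \<tau> where \<sigma>: "\<sigma> \<in> perms k" and \<tau>: "\<tau> \<in> perms (n - k)"
      and xs: "xs = sign_sum a \<sigma> \<tau>"
      using sign_sum_decompose[OF less.prems(1) split] .
    have avoid: "\<forall>b. avoids2413 (sign_rel b) \<sigma>" "\<forall>b. avoids2413 (sign_rel b) \<tau>"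
      using less.prems(3) avoids2413_sign_sum_iff[OF \<sigma> \<tau>] xs by auto
    obtain l where l: "di_sk l" "perm_of_tree l = \<sigma>"
      using less.IH[OF \<open>k < n\<close> \<sigma> \<open>0 < k\<close> avoid(1)] by blast
    obtain r where r: "di_sk r" "perm_of_tree r = \<tau>"
      using less.IH[OF _ \<tau> _ avoid(2)] k by auto
    \<comment> \<open>the right child cannot carry the label \<open>a\<close>: its split would extend the greatest split of \<open>xs\<close>\<close>
    have "case r of Leaf \<Rightarrow> True | Node _ b _ \<Rightarrow> b \<noteq> a"
    proof (cases r)
      case (Node l' b r')
      have "\<not> splits_at (sign_rel a) xs (k + Suc (size l'))"
        using greatest by fastforce
      moreover have "length \<sigma> = k"
        using \<sigma> by (simp add: perms_def)
      ultimately have "\<not> splits_at (sign_rel a) \<tau> (Suc (size l'))"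
        using splits_at_sign_sum_add split xs by metis
      with r(2) Node show ?thesis
        using splits_at_perm_of_tree by auto
    qed simp
    then show ?thesis using l r xs by (intro exI[of _ "Node l a r"]) simp
  qed
qed

fun descents :: "nat list \<Rightarrow> sign list" where
  "descents (x # y # zs) = (if y < x then Minus else Plus) # descents (y # zs)"
| "descents _ = []"

lemma length_descents [simp]: "length (descents xs) = length xs - 1"
  by (induction xs rule: descents.induct) auto

lemma nth_descents:
  "i + 1 < length xs \<Longrightarrow> descents xs ! i = (if xs ! (i + 1) < xs ! i then Minus else Plus)"
  by (induction xs arbitrary: i rule: descents.induct) (auto simp: nth_Cons split: nat.split)

lemma descents_map_add [simp]: "descents (map (\<lambda>x. x + c) xs) = descents xs"
  by (induction xs rule: descents.induct) auto

lemma descents_append: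
  "xs \<noteq> [] \<Longrightarrow> ys \<noteq> [] \<Longrightarrow>
   descents (xs @ ys) = descents xs @ (if hd ys < last xs then Minus else Plus) # descents ys"
  by (induction xs rule: descents.induct) (auto simp: neq_Nil_conv)

lemma descents_sign_sum:
  assumes "xs \<in> perms m" "ys \<in> perms n" "0 < m" "0 < n"
  shows "descents (sign_sum a xs ys) = descents xs @ a # descents ys"
proof -
  have ne: "xs \<noteq> []" "ys \<noteq> []" using assms by (auto simp: perms_def)
  then have "last xs \<le> m" "1 \<le> hd ys" "1 \<le> last xs" "hd ys \<le> n" "length xs = m" "length ys = n"
    using perms_memD[OF assms(1) last_in_set] perms_memD[OF assms(2) hd_in_set] assms
    by (auto simp: perms_def)
  then show ?thesis
    using ne by (cases a) (auto simp: descents_append hd_map last_map)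
qed

lemma descents_perm_of_tree: "descents (perm_of_tree t) = inorder t"
  by (induction t) (simp_all add: descents_sign_sum[OF perm_of_tree_perms perm_of_tree_perms])

lemma pval_Suc_Suc_less_iff:
  "pval xs (Suc (Suc i)) < pval xs (Suc i) \<longleftrightarrow> i < length (descents xs) \<and> descents xs ! i = Minus"
  by (auto simp: pval_def nth_descents)

lemma des_eq_count_Minus: "des xs = length (filter (\<lambda>s. s = Minus) (descents xs))"
proof -
  have "{i \<in> {1..length xs}. pval xs (i + 1) < pval xs i} =
        Suc ` {j. j < length (descents xs) \<and> descents xs ! j = Minus}"
  proof (intro set_eqI iffI)
    fix i assume "i \<in> {i \<in> {1..length xs}. pval xs (i + 1) < pval xs i}"
    then obtain j where "i = Suc j" "pval xs (Suc (Suc j)) < pval xs (Suc j)"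
      by (cases i) auto
    then show "i \<in> Suc ` {j. j < length (descents xs) \<and> descents xs ! j = Minus}"
      by (simp add: pval_Suc_Suc_less_iff)
  next
    fix i assume "i \<in> Suc ` {j. j < length (descents xs) \<and> descents xs ! j = Minus}"
    then obtain j where "i = Suc j" "j < length (descents xs)" "descents xs ! j = Minus"
      by blast
    then show "i \<in> {i \<in> {1..length xs}. pval xs (i + 1) < pval xs i}"
      using pval_Suc_Suc_less_iff[of xs j] by simp
  qed
  then show ?thesis
    by (simp add: des_def card_image length_filter_conv_card)
qed

lemma dd_eq_0_iff:
  "dd xs = 0 \<longleftrightarrow> (\<forall>s ss. descents xs = s # ss \<longrightarrow> s = Plus) \<and>
     (\<forall>i. i + 1 < length (descents xs) \<longrightarrow> \<not> (descents xs ! i = Minus \<and> descents xs ! (i + 1) = Minus))"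
proof -
  let ?w = "descents xs"
  let ?D = "{i \<in> {1..length xs}. pval xs i < pval xs (i - 1) \<and> pval xs (i + 1) < pval xs i}"
  define desc where "desc i \<longleftrightarrow> i < length ?w \<and> ?w ! i = Minus" for i
  have desc: "pval xs (j + 2) < pval xs (j + 1) \<longleftrightarrow> desc j" for j
    using pval_Suc_Suc_less_iff[of xs j] by (simp add: desc_def)
  have "i \<in> ?D \<longleftrightarrow> (i = 1 \<and> desc 0) \<or> (\<exists>j. i = j + 2 \<and> desc j \<and> desc (j + 1))" for i
  proof -
    consider "i = 0" | "i = 1" | j where "i = j + 2"
      by (metis add_2_eq_Suc' not0_implies_Suc One_nat_def)
    then show ?thesis
    proof cases
      case 3
      then show ?thesis
        using desc[of j] desc[of "j + 1"] by (auto simp: desc_def numeral_eq_Suc)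
    qed (use desc[of 0] in \<open>auto simp: desc_def pval_def\<close>)
  qed
  then have "?D = {} \<longleftrightarrow> \<not> desc 0 \<and> (\<forall>j. \<not> (desc j \<and> desc (j + 1)))"
    by blast
  moreover have "\<not> desc 0 \<longleftrightarrow> (\<forall>s ss. ?w = s # ss \<longrightarrow> s = Plus)"
    by (cases ?w) (auto simp: desc_def intro: sign.exhaust)
  ultimately show ?thesis
    unfolding dd_def desc_def by auto
qed

lemma avoiding_eq: "avoiding n = {xs \<in> perms n. \<forall>b. avoids2413 (sign_rel b) xs}"
  unfolding avoiding_def all_sign sign_rel.simps contains_2413_iff contains_3142_iff by simp

lemma bij_betw_perm_of_tree:
  assumes "0 < n"
  shows "bij_betw perm_of_tree (DT n) (avoiding n)"
proof -
  have "inj_on perm_of_tree (DT n)"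
    unfolding inj_on_def DT_def using perm_of_tree_inj by blast
  moreover have "perm_of_tree ` DT n = avoiding n"
  proof
    show "perm_of_tree ` DT n \<subseteq> avoiding n"
    proof
      fix xs assume "xs \<in> perm_of_tree ` DT n"
      then obtain t where t: "t \<in> DT n" "xs = perm_of_tree t" by blast
      with assms have "Suc (size t) = n" by (simp add: DT_def)
      with t show "xs \<in> avoiding n"
        using perm_of_tree_perms[of t] avoids2413_perm_of_tree by (auto simp: avoiding_eq)
    qed
    show "avoiding n \<subseteq> perm_of_tree ` DT n"
    proof
      fix xs assume "xs \<in> avoiding n"
      then have xs: "xs \<in> perms n" "\<forall>b. avoids2413 (sign_rel b) xs"
        by (simp_all add: avoiding_eq)
      then obtain t where "di_sk t" "perm_of_tree t = xs"
        using perm_of_tree_surj assms by blast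
      moreover from xs(1) have "length xs = n"
        by (simp add: perms_def)
      ultimately show "xs \<in> perm_of_tree ` DT n"
        by (auto simp: DT_def)
    qed
  qed
  ultimately show ?thesis by (simp add: bij_betw_def)
qed

lemma bij_betw_restrict:
  assumes "bij_betw f A B" "A' \<subseteq> A" "B' \<subseteq> B" "\<And>x. x \<in> A \<Longrightarrow> x \<in> A' \<longleftrightarrow> f x \<in> B'"
  shows "bij_betw f A' B'"
proof (rule bij_betw_subset[OF assms(1,2)])
  show "f ` A' = B'"
    using assms by (auto simp: bij_betw_def)
qed

lemma perm_of_tree_descent_iff:
  "i + 1 < length (perm_of_tree t) \<Longrightarrow>
   perm_of_tree t ! (i + 1) < perm_of_tree t ! i \<longleftrightarrow> inorder t ! i = Minus"
  using nth_descents[of i "perm_of_tree t"] by (simp add: descents_perm_of_tree)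

lemma perm_of_tree_in_SS_iff:
  assumes "0 < n" "t \<in> DT n"
  shows "perm_of_tree t \<in> SS n k \<longleftrightarrow> t \<in> DT2 n k"
proof -
  have "perm_of_tree t \<in> avoiding n"
    using bij_betwE[OF bij_betw_perm_of_tree[OF assms(1)]] assms(2) by blast
  with assms(2) show ?thesis
    by (auto simp: SS_def DT2_def n_minus_def des_eq_count_Minus dd_eq_0_iff descents_perm_of_tree)
qed

theorem theorem2p15:
  fixes n :: nat
  assumes "n \<ge> 1"
  shows "\<exists>T :: nat list \<Rightarrow> sign tree.
     bij_betw T (avoiding n) (DT n)
   \<and> (\<forall>\<pi>\<in>avoiding n. \<forall>i\<in>{1..n-1}.
        (\<pi> ! (i - 1) > \<pi> ! i) \<longleftrightarrow> inorder (T \<pi>) ! (i - 1) = Minus)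
   \<and> (\<forall>k. k \<le> (n - 1) div 2 \<longrightarrow> bij_betw T (SS n k) (DT2 n k))"
proof -
  let ?T = "inv_into (DT n) perm_of_tree"
  have bij: "bij_betw perm_of_tree (DT n) (avoiding n)"
    using assms by (simp add: bij_betw_perm_of_tree)
  then have bij_T: "bij_betw ?T (avoiding n) (DT n)"
    by (rule bij_betw_inv_into)
  have T: "?T \<pi> \<in> DT n" "perm_of_tree (?T \<pi>) = \<pi>" if "\<pi> \<in> avoiding n" for \<pi>
    using that bij bij_betwE[OF bij_T] by (auto simp: bij_betw_def f_inv_into_f)
  have "(\<pi> ! (i - 1) > \<pi> ! i) \<longleftrightarrow> inorder (?T \<pi>) ! (i - 1) = Minus"
    if "\<pi> \<in> avoiding n" "i \<in> {1..n-1}" for \<pi> i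
    using perm_of_tree_descent_iff[of "i - 1" "?T \<pi>"] T[OF that(1)] that(2) by (auto simp: DT_def)
  moreover have "bij_betw ?T (SS n k) (DT2 n k)" for k
  proof (rule bij_betw_restrict[OF bij_T])
    show "\<pi> \<in> SS n k \<longleftrightarrow> ?T \<pi> \<in> DT2 n k" if "\<pi> \<in> avoiding n" for \<pi>
      using perm_of_tree_in_SS_iff[OF _ T(1)[OF that]] T(2)[OF that] assms by simp
  qed (auto simp: SS_def DT2_def)
  \<comment> \<open>the restriction is a bijection for every \<open>k\<close>\<close>
  ultimately show ?thesis
    using bij_T by blast
qed

end
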